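(* Let $(X,d)$ be a complete metric space and let $T:X\to \mathcal{CB}(X)$ be a multi-valued mapping such that \[ \mathcal{H}(Tx,Ty)\leq d(x,y)-\theta(d(x,y)) \] for all $x,y\in X$ with $x\neq y$, where $\theta:(0,\infty)\to(0,\infty)$ is a lower semicontinuous map such that $t\mapsto\frac{\theta(t)}{t}$ is non-increasing on $(0,\infty)$. Then $T$ has a fixed point, i.e., there exists $v\in X$ with $v\in Tv$.
   Context: $\mathcal{CB}(X)$ denotes the family of all nonempty closed and bounded subsets of $X$, and $\mathcal{H}$ is the Hausdorff metric on $\mathcal{CB}(X)$ induced by $d$: $\mathcal{H}(A,B)=\max\{\sup_{x\in B}d(x,A),\ \sup_{x\in A}d(x,B)\}$. *)

theory Defs
  imports "HOL-Analysis.Analysis"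
begin

definition CB :: "'a::metric_space set set" where
  "CB = {A. A \<noteq> {} \<and> closed A \<and> bounded A}"

definition hausdorff_H :: "'a::metric_space set \<Rightarrow> 'a set \<Rightarrow> real" where
  "hausdorff_H A B = max (SUP x\<in>B. infdist x A) (SUP x\<in>A. infdist x B)"

definition lsc_on :: "real set \<Rightarrow> (real \<Rightarrow> real) \<Rightarrow> bool" where
  "lsc_on S f \<longleftrightarrow> (\<forall>t\<in>S. \<forall>e>0. \<exists>\<delta>>0. \<forall>s\<in>S. \<bar>s - t\<bar> < \<delta> \<longrightarrow> f t - e < f s)"

end

theory Submission
  imports Defs
begin

text \<open>Fix \<open>x\<^sub>1 \<in> T x\<^sub>0\<close> with \<open>r = d(x\<^sub>0, x\<^sub>1) > 0\<close> and put \<open>c = \<theta>(r)/r\<close>. Since \<open>\<theta>(t)/t\<close> is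
  non-increasing, \<open>\<theta>(t) \<ge> c t\<close> for \<open>t \<le> r\<close>, so \<open>T\<close> is a Nadler contraction with constant
  \<open>1 - c\<close> on pairs at distance at most \<open>r\<close>. Choosing successive points with the slightly worse
  constant \<open>q = 1 - c/2\<close> produces an orbit whose steps shrink geometrically and hence never exceed
  \<open>r\<close>; its limit is a fixed point because \<open>T\<close> is Hausdorff-nonexpansive.\<close>

lemma infdist_le_hausdorff_H:
  fixes A B :: "'a::metric_space set"
  assumes "bounded A" "x \<in> A"
  shows "infdist x B \<le> hausdorff_H A B"
proof -
  obtain e where e: "\<And>y. y \<in> A \<Longrightarrow> dist x y \<le> e"
    using assms(1) bounded_any_center[of A x] by blast
  have "bdd_above ((\<lambda>y. infdist y B) ` A)"
  proof (rule bdd_aboveI2)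
    fix y assume "y \<in> A"
    have "infdist y B \<le> infdist x B + dist y x" by (rule infdist_triangle)
    then show "infdist y B \<le> infdist x B + e" using e[OF \<open>y \<in> A\<close>] by (simp add: dist_commute)
  qed
  then have "infdist x B \<le> (SUP y\<in>A. infdist y B)" by (rule cSUP_upper[OF assms(2)])
  then show ?thesis unfolding hausdorff_H_def by simp
qed

lemma hausdorff_H_nonneg:
  fixes A B :: "'a::metric_space set"
  assumes "bounded A" "A \<noteq> {}"
  shows "0 \<le> hausdorff_H A B"
  using assms infdist_le_hausdorff_H[OF assms(1)] infdist_nonneg by (metis order.trans ex_in_conv)

lemma hausdorff_H_self:
  fixes A :: "'a::metric_space set"
  assumes "A \<noteq> {}"
  shows "hausdorff_H A A = 0"
  using assms by (simp add: hausdorff_H_def infdist_zero cong: SUP_cong)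

lemma hausdorff_H_obtain_close_point:
  fixes A B :: "'a::metric_space set"
  assumes "bounded A" "B \<noteq> {}" "y \<in> A" "hausdorff_H A B < e"
  obtains z where "z \<in> B" "dist y z < e"
proof -
  have "infdist y B < e" using infdist_le_hausdorff_H[OF assms(1,3), of B] assms(4) by linarith
  then show ?thesis using that assms(2) by (auto simp: infdist_def cINF_less_iff)
qed

lemma Cauchy_if_dist_Suc_le_geometric:
  fixes x :: "nat \<Rightarrow> 'a::metric_space"
  assumes q: "0 \<le> q" "q < 1" and step: "\<And>n. dist (x n) (x (Suc n)) \<le> q ^ n * D"
  shows "Cauchy x"
proof -
  have D: "0 \<le> D" using order_trans[OF zero_le_dist step[of 0]] by simp
  have partial: "dist (x m) (x (m + k)) \<le> q ^ m * D * (1 - q ^ k) / (1 - q)" for m k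
  proof (induction k)
    case 0 then show ?case by simp
  next
    case (Suc k)
    have "dist (x m) (x (m + Suc k)) \<le> dist (x m) (x (m + k)) + dist (x (m + k)) (x (Suc (m + k)))"
      by (simp add: dist_triangle)
    also have "\<dots> \<le> q ^ m * D * (1 - q ^ k) / (1 - q) + q ^ (m + k) * D"
      using Suc step[of "m + k"] by simp
    also have "\<dots> = q ^ m * D * (1 - q ^ Suc k) / (1 - q)"
      using q by (simp add: field_simps power_add)
    finally show ?case .
  qed
  have tail: "dist (x (m + k)) (x m) \<le> q ^ m * (D / (1 - q))" for m k
  proof -
    have "q ^ m * D * (1 - q ^ k) / (1 - q) \<le> q ^ m * D * 1 / (1 - q)"
      using q D by (intro divide_right_mono mult_left_mono) auto
    then show ?thesis using partial[of m k] by (simp add: dist_commute)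
  qed
  have tail_lim: "(\<lambda>m. q ^ m * (D / (1 - q))) \<longlonglongrightarrow> 0"
    using q by (intro tendsto_mult_left_zero LIMSEQ_power_zero) auto
  show ?thesis
    unfolding Cauchy_altdef2
  proof (intro allI impI)
    fix e :: real assume "0 < e"
    then obtain N where N: "q ^ N * (D / (1 - q)) < e"
      using order_tendstoD(2)[OF tail_lim \<open>0 < e\<close>] by (auto simp: eventually_sequentially)
    have "dist (x n) (x N) < e" if "n \<ge> N" for n
      using tail[of N "n - N"] N that by simp
    then show "\<exists>N. \<forall>n\<ge>N. dist (x n) (x N) < e" by blast
  qed
qed

lemma exists_geometric_orbit:
  fixes T :: "'a::metric_space \<Rightarrow> 'a set"
  assumes x1: "x1 \<in> T x0" and q: "0 \<le> q" "q \<le> 1"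
    and step: "\<And>x y. y \<in> T x \<Longrightarrow> dist x y \<le> dist x0 x1 \<Longrightarrow> \<exists>z\<in>T y. dist y z \<le> q * dist x y"
  obtains x where "\<And>n. x (Suc n) \<in> T (x n)" "\<And>n. dist (x n) (x (Suc n)) \<le> q ^ n * dist x0 x1"
proof -
  define r where "r = dist x0 x1"
  define P where "P n p \<longleftrightarrow> snd p \<in> T (fst p) \<and> dist (fst p) (snd p) \<le> q ^ n * r" for n p
  have "\<exists>p'. P (Suc n) p' \<and> fst p' = snd p" if "P n p" for n p
  proof -
    have "q ^ n * r \<le> 1 * r" using q by (intro mult_right_mono power_le_one) (auto simp: r_def)
    then have "dist (fst p) (snd p) \<le> r" using that by (simp add: P_def)
    moreover have "snd p \<in> T (fst p)" using that by (simp add: P_def)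
    ultimately obtain z where "z \<in> T (snd p)" "dist (snd p) z \<le> q * dist (fst p) (snd p)"
      using step by (auto simp: r_def)
    moreover have "q * dist (fst p) (snd p) \<le> q * (q ^ n * r)"
      using that q by (intro mult_left_mono) (auto simp: P_def)
    ultimately show ?thesis by (intro exI[of _ "(snd p, z)"]) (auto simp: P_def)
  qed
  moreover have "P 0 (x0, x1)" using x1 by (simp add: P_def r_def)
  ultimately obtain p where "\<And>n. P n (p n) \<and> fst (p (Suc n)) = snd (p n)"
    using dependent_nat_choice[of P "\<lambda>_ p p'. fst p' = snd p"] by blast
  then show ?thesis by (intro that[of "fst \<circ> p"]) (auto simp: P_def r_def)
qed

lemma mem_of_orbit_limit:
  fixes T :: "'a::metric_space \<Rightarrow> 'a set"
  assumes T_CB: "\<And>x. T x \<in> CB"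
    and nonexp: "\<And>x y. hausdorff_H (T x) (T y) \<le> dist x y"
    and orbit: "\<And>n. x (Suc n) \<in> T (x n)" and lim: "x \<longlonglongrightarrow> v"
  shows "v \<in> T v"
proof -
  have "infdist (x (Suc n)) (T v) \<le> dist (x n) v" for n
  proof -
    have "bounded (T (x n))" using T_CB[of "x n"] by (simp add: CB_def)
    then have "infdist (x (Suc n)) (T v) \<le> hausdorff_H (T (x n)) (T v)"
      using orbit by (rule infdist_le_hausdorff_H)
    then show ?thesis using nonexp[of "x n" v] by linarith
  qed
  moreover have "(\<lambda>n. infdist (x (Suc n)) (T v)) \<longlonglongrightarrow> infdist v (T v)"
    using lim by (intro tendsto_infdist LIMSEQ_Suc)
  moreover have "(\<lambda>n. dist (x n) v) \<longlonglongrightarrow> 0"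
    using lim tendsto_dist_iff by blast
  ultimately have "infdist v (T v) \<le> 0"
    by (intro tendsto_le[OF _ _ _ always_eventually]) auto
  then show ?thesis
    using in_closed_iff_infdist_zero[of "T v" v] infdist_nonneg[of v "T v"] T_CB[of v]
    by (auto simp: CB_def)
qed

lemma hausdorff_H_le_ratio_contraction:
  assumes contr: "\<And>x y. x \<noteq> y \<Longrightarrow> hausdorff_H (T x) (T y) \<le> dist x y - \<theta> (dist x y)"
    and theta_ratio: "\<And>s t. 0 < s \<Longrightarrow> s \<le> t \<Longrightarrow> \<theta> t / t \<le> \<theta> s / s"
    and "0 < dist x y" "dist x y \<le> r"
  shows "hausdorff_H (T x) (T y) \<le> (1 - \<theta> r / r) * dist x y"
proof -
  have "\<theta> r / r * dist x y \<le> \<theta> (dist x y)"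
    using theta_ratio[OF assms(3,4)] assms(3) by (simp add: field_simps)
  then show ?thesis using contr[of x y] assms(3) by (simp add: algebra_simps)
qed

lemma hausdorff_contraction_local_fixpoint:
  fixes T :: "'a::complete_space \<Rightarrow> 'a set"
  assumes T_CB: "\<And>x. T x \<in> CB"
    and nonexp: "\<And>x y. hausdorff_H (T x) (T y) \<le> dist x y"
    and x1: "x1 \<in> T x0" and k: "0 \<le> k" "k < 1"
    and local_contr: "\<And>x y. 0 < dist x y \<Longrightarrow> dist x y \<le> dist x0 x1 \<Longrightarrow>
      hausdorff_H (T x) (T y) \<le> k * dist x y"
  shows "\<exists>v. v \<in> T v"
proof -
  have bounded: "bounded (T x)" and nonempty: "T x \<noteq> {}" for x
    using T_CB[of x] by (auto simp: CB_def)
  define q where "q = (1 + k) / 2"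
  have q: "0 \<le> q" "q < 1" "k < q" using k by (auto simp: q_def)
  have step: "\<exists>z\<in>T y. dist y z \<le> q * dist x y" if "y \<in> T x" "dist x y \<le> dist x0 x1" for x y
  proof (cases "x = y")
    case False
    then have "hausdorff_H (T x) (T y) \<le> k * dist x y"
      using that(2) by (intro local_contr) auto
    also have "\<dots> < q * dist x y"
      using False q(3) by (intro mult_strict_right_mono) auto
    finally show ?thesis
      by (meson hausdorff_H_obtain_close_point[OF bounded nonempty that(1)] less_imp_le)
  qed (use that in auto)
  obtain x where orbit: "\<And>n. x (Suc n) \<in> T (x n)"
    and "\<And>n. dist (x n) (x (Suc n)) \<le> q ^ n * dist x0 x1"
    using exists_geometric_orbit[OF x1 q(1) less_imp_le[OF q(2)] step] by blast
  then have "Cauchy x" using q by (intro Cauchy_if_dist_Suc_le_geometric)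
  then obtain v where "x \<longlonglongrightarrow> v" using Cauchy_convergent_iff convergent_def by blast
  then show ?thesis using mem_of_orbit_limit[of T x v, OF T_CB nonexp orbit] by blast
qed

theorem mainTheorem4:
  fixes T :: "'a::complete_space \<Rightarrow> 'a set"
    and \<theta> :: "real \<Rightarrow> real"
  assumes T_CB: "\<And>x. T x \<in> CB"
    and contr: "\<And>x y. x \<noteq> y \<Longrightarrow> hausdorff_H (T x) (T y) \<le> dist x y - \<theta> (dist x y)"
    and theta_pos: "\<And>t. t > 0 \<Longrightarrow> \<theta> t > 0"
    and theta_lsc: "lsc_on {0<..} \<theta>"
    and theta_ratio: "\<And>s t. 0 < s \<Longrightarrow> s \<le> t \<Longrightarrow> \<theta> t / t \<le> \<theta> s / s"
  shows "\<exists>v. v \<in> T v"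
proof -
  have bounded: "bounded (T x)" and nonempty: "T x \<noteq> {}" for x
    using T_CB[of x] by (auto simp: CB_def)
  have nonexp: "hausdorff_H (T x) (T y) \<le> dist x y" for x y
    using contr[of x y] theta_pos[of "dist x y"] hausdorff_H_self[OF nonempty] by (cases "x = y") auto
  obtain x0 x1 where x1: "x1 \<in> T x0" using nonempty by blast
  define r where "r = dist x0 x1"
  define c where "c = \<theta> r / r"
  have local_contr: "hausdorff_H (T x) (T y) \<le> (1 - c) * dist x y"
    if "0 < dist x y" "dist x y \<le> r" for x y
    unfolding c_def using hausdorff_H_le_ratio_contraction[OF contr theta_ratio that] .
  show ?thesis
  proof (cases "x0 = x1")
    case False
    then have "0 < r" "0 < c" using theta_pos by (auto simp: r_def c_def)
    moreover have "0 \<le> (1 - c) * r"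
      using local_contr[of x0 x1] hausdorff_H_nonneg[OF bounded nonempty, of x0 "T x1"] \<open>0 < r\<close>
      by (simp add: r_def)
    ultimately have "0 \<le> 1 - c" "1 - c < 1" by (simp_all add: zero_le_mult_iff)
    then show ?thesis
      using hausdorff_contraction_local_fixpoint[OF T_CB nonexp x1, of "1 - c"] local_contr
      unfolding r_def by blast
  qed (use x1 in auto)
qed

end
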